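(* Let $p_1,p_2\in\mathbb{R}^3$ be distinct points and let $\pi_1,\pi_2\subset\mathbb{R}^3$ be two distinct affine $2$-planes, both containing $p_1$ and $p_2$ and neither passing through the origin $O$. For $p_3\in\pi_1\setminus\pi_2$ and $p_4\in\pi_2\setminus\pi_1$ set \[ \omega(p_1,p_2;p_3,p_4)=\frac{\det(p_2-p_1,\,p_3-p_1,\,p_4-p_1)}{\det(p_1,p_2,p_3)\,\det(p_1,p_2,p_4)} . \] Then the value $\omega(p_1,p_2;p_3,p_4)$ does not depend on the choice of $p_3\in\pi_1\setminus\pi_2$ and $p_4\in\pi_2\setminus\pi_1$.
   Context: Points of $\mathbb{R}^3$ are identified with their coordinate vectors, and $\det(u,v,w)$ denotes the determinant of the $3\times 3$ matrix with columns $u,v,w$. For points $p_1,p_2,p_3,p_4$ such that ${\rm span}(p_1,p_2,p_3)$ and ${\rm span}(p_1,p_2,p_4)$ (minimal affine subspaces containing the points) are $2$-dimensional and do not contain $O$, the quantity $\omega(p_1,p_2;p_3,p_4)$ above is called the projective lifting coefficient on $p_1p_2$ induced by these two planes. *)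

theory Defs
  imports "HOL-Analysis.Analysis"
begin

definition det3 :: "real^3 \<Rightarrow> real^3 \<Rightarrow> real^3 \<Rightarrow> real" where
  "det3 u v w = det (transpose (vector [u, v, w] :: real^3^3))"

definition omega :: "real^3 \<Rightarrow> real^3 \<Rightarrow> real^3 \<Rightarrow> real^3 \<Rightarrow> real" where
  "omega p1 p2 p3 p4 =
     det3 (p2 - p1) (p3 - p1) (p4 - p1) / (det3 p1 p2 p3 * det3 p1 p2 p4)"

end

theory Submission
  imports Defs
begin

text \<open>Moving \<open>p3\<close> within the plane through \<open>p1, p2, p3\<close>, i.e. replacing \<open>p3 - p1\<close> by
  \<open>s (p2 - p1) + t (p3 - p1)\<close>, multiplies both the numerator of \<open>\<omega>\<close> and the factor
  \<open>det(p1, p2, p3)\<close> of its denominator by \<open>t\<close>; the same holds for \<open>p4\<close>, since \<open>\<omega>\<close> is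
  antisymmetric in \<open>p3, p4\<close>. Every point of \<open>\<pi>1 - \<pi>2\<close> is of this form with \<open>t \<noteq> 0\<close>,
  because \<open>\<pi>1\<close> is the affine hull of \<open>p1, p2, p3\<close> and the line \<open>p1 p2\<close> lies in \<open>\<pi>2\<close>.\<close>

lemma det3_expand:
  "det3 u v w = u$1 * v$2 * w$3 + v$1 * w$2 * u$3 + w$1 * u$2 * v$3
              - u$1 * w$2 * v$3 - v$1 * u$2 * w$3 - w$1 * v$2 * u$3"
  unfolding det3_def det_3 by (simp add: transpose_def vector_3 algebra_simps)

lemma det3_swap23: "det3 u w v = - det3 u v w"
  unfolding det3_expand by (simp add: algebra_simps)

lemma omega_swap34: "omega p1 p2 p4 p3 = - omega p1 p2 p3 p4"
  unfolding omega_def det3_swap23[of "p2 - p1" "p4 - p1"] by (simp add: mult.commute)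

lemma omega_shear3:
  assumes "t \<noteq> 0"
  shows "omega p1 p2 (p1 + s *\<^sub>R (p2 - p1) + t *\<^sub>R (p3 - p1)) p4 = omega p1 p2 p3 p4"
proof -
  let ?q = "p1 + s *\<^sub>R (p2 - p1) + t *\<^sub>R (p3 - p1)"
  have numerator: "det3 (p2 - p1) (?q - p1) (p4 - p1) = t * det3 (p2 - p1) (p3 - p1) (p4 - p1)"
    unfolding det3_expand by (simp add: algebra_simps)
  have denominator: "det3 p1 p2 ?q = t * det3 p1 p2 p3"
    unfolding det3_expand by (simp add: algebra_simps)
  show ?thesis
    unfolding omega_def numerator denominator using assms by simp
qed

lemma omega_shear4:
  assumes "t \<noteq> 0"
  shows "omega p1 p2 p3 (p1 + s *\<^sub>R (p2 - p1) + t *\<^sub>R (p4 - p1)) = omega p1 p2 p3 p4"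
proof -
  have "omega p1 p2 (p1 + s *\<^sub>R (p2 - p1) + t *\<^sub>R (p4 - p1)) p3 = omega p1 p2 p4 p3"
    by (rule omega_shear3[OF assms])
  then show ?thesis
    by (metis omega_swap34 neg_equal_iff_equal)
qed

lemma affine_plane_off_line_decomp:
  fixes S :: "'a::euclidean_space set"
  assumes "affine S" "aff_dim S = 2" "p1 \<noteq> p2" "p1 \<in> S" "p2 \<in> S"
    and "p3 \<in> S - affine hull {p1, p2}" "q \<in> S - affine hull {p1, p2}"
  obtains s t where "t \<noteq> 0" "q = p1 + s *\<^sub>R (p2 - p1) + t *\<^sub>R (p3 - p1)"
proof -
  have "aff_dim {p3, p1, p2} = 2"
    using assms(3,6) by (simp add: aff_dim_insert)
  then have "aff_dim (affine hull {p3, p1, p2}) = aff_dim S"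
    using assms(2) by simp
  moreover have "affine hull {p3, p1, p2} \<subseteq> S"
    using assms(1,4-6) by (simp add: hull_minimal)
  ultimately have "affine hull {p3, p1, p2} = S"
    by (intro affine_dim_equal[OF affine_affine_hull assms(1)]) auto
  then obtain u v w where q: "q = u *\<^sub>R p3 + v *\<^sub>R p1 + w *\<^sub>R p2" "u + v + w = 1"
    using assms(7) unfolding affine_hull_3 by blast
  then have "v = 1 - u - w"
    by simp
  with q have q_eq: "q = p1 + w *\<^sub>R (p2 - p1) + u *\<^sub>R (p3 - p1)"
    by (simp add: algebra_simps)
  have "u \<noteq> 0"
  proof
    assume "u = 0"
    then have "q \<in> affine hull {p1, p2}"
      using q unfolding affine_hull_2 by auto
    then show False using assms(7) by blast
  qed
  then show thesis using q_eq by (rule that)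
qed

theorem proposition2p2:
  fixes p1 p2 :: "real^3" and \<pi>1 \<pi>2 :: "(real^3) set"
  assumes "p1 \<noteq> p2"
    and "affine \<pi>1" and "aff_dim \<pi>1 = 2"
    and "affine \<pi>2" and "aff_dim \<pi>2 = 2"
    and "\<pi>1 \<noteq> \<pi>2"
    and "p1 \<in> \<pi>1" and "p2 \<in> \<pi>1" and "p1 \<in> \<pi>2" and "p2 \<in> \<pi>2"
    and "0 \<notin> \<pi>1" and "0 \<notin> \<pi>2"
  shows "\<forall>p3 p4 q3 q4.
           p3 \<in> \<pi>1 - \<pi>2 \<and> p4 \<in> \<pi>2 - \<pi>1 \<and> q3 \<in> \<pi>1 - \<pi>2 \<and> q4 \<in> \<pi>2 - \<pi>1 \<longrightarrow>
           omega p1 p2 p3 p4 = omega p1 p2 q3 q4"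
proof (intro allI impI)
  fix p3 p4 q3 q4
  assume points: "p3 \<in> \<pi>1 - \<pi>2 \<and> p4 \<in> \<pi>2 - \<pi>1 \<and> q3 \<in> \<pi>1 - \<pi>2 \<and> q4 \<in> \<pi>2 - \<pi>1"
  have "affine hull {p1, p2} \<subseteq> \<pi>1" "affine hull {p1, p2} \<subseteq> \<pi>2"
    using assms by (simp_all add: hull_minimal)
  then have off_line: "p3 \<notin> affine hull {p1, p2}" "q3 \<notin> affine hull {p1, p2}"
    "p4 \<notin> affine hull {p1, p2}" "q4 \<notin> affine hull {p1, p2}"
    using points by blast+
  obtain s t where "t \<noteq> 0" and q3: "q3 = p1 + s *\<^sub>R (p2 - p1) + t *\<^sub>R (p3 - p1)"
    using affine_plane_off_line_decomp[of \<pi>1 p1 p2 p3 q3] assms points off_line by blast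
  obtain s' t' where "t' \<noteq> 0" and q4: "q4 = p1 + s' *\<^sub>R (p2 - p1) + t' *\<^sub>R (p4 - p1)"
    using affine_plane_off_line_decomp[of \<pi>2 p1 p2 p4 q4] assms points off_line by blast
  show "omega p1 p2 p3 p4 = omega p1 p2 q3 q4"
    unfolding q3 q4 omega_shear3[OF \<open>t \<noteq> 0\<close>] omega_shear4[OF \<open>t' \<noteq> 0\<close>] ..
qed

end
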